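(* Let $r\ge 3$, $n\ge1$, and let $f:\mathbb{Z}_r^n\to\mathbb{C}$ satisfy $f^{>1}\equiv 0$. Suppose $\|d(f,\{0,1\})\|_2^2\le\epsilon'$, $\|f^{=1}\|_2^2<10^4\epsilon'$, and $\epsilon'<\frac{2}{10^8 r}$. Then $\|f^{=1}\|_2^2<2\epsilon'$.
   Context: $\mathbb{Z}_r^n$ carries the uniform probability measure $\mu$; for $f:\mathbb{Z}_r^n\to\mathbb{C}$, $\|f\|_2^2=\int|f|^2\,d\mu$. For $S\in\mathbb{Z}_r^n$, $u_S(T)=\exp\big(2\pi i\sum_{k=1}^n S_kT_k/r\big)$; these form an orthonormal basis, and $\widehat f(S)=\int f(T)\overline{u_S(T)}\,\mu(dT)$, so $f=\sum_S\widehat f(S)u_S$. Let $|S|=|\{k:S_k\ne0\}|$, $f^{=k}=\sum_{|S|=k}\widehat f(S)u_S$, $f^{>k}=\sum_{|S|>k}\widehat f(S)u_S$. For $z\in\mathbb{C}$, $d(z,\{0,1\})=\min(|z|,|z-1|)$, and $d(f,\{0,1\})$ denotes the function $x\mapsto d(f(x),\{0,1\})$. *)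

theory Defs
  imports "HOL-Analysis.Analysis" "HOL-Library.FuncSet"
begin

text \<open>The group Z_r^n, represented as extensional functions {0..<n} -> {0..<r}
  (value undefined outside {0..<n}).\<close>
definition cube :: "nat \<Rightarrow> nat \<Rightarrow> (nat \<Rightarrow> nat) set" where
  "cube r n = PiE {0..<n} (\<lambda>_. {0..<r})"

definition character :: "nat \<Rightarrow> nat \<Rightarrow> (nat \<Rightarrow> nat) \<Rightarrow> (nat \<Rightarrow> nat) \<Rightarrow> complex" where
  "character r n S T = exp (2 * pi * \<i> * of_nat (\<Sum>k<n. S k * T k) / of_nat r)"

definition avg :: "nat \<Rightarrow> nat \<Rightarrow> ((nat \<Rightarrow> nat) \<Rightarrow> 'a::real_vector) \<Rightarrow> 'a" where
  "avg r n g = (1 / real (card (cube r n))) *\<^sub>R (\<Sum>T\<in>cube r n. g T)"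

definition fourier_coeff :: "nat \<Rightarrow> nat \<Rightarrow> ((nat \<Rightarrow> nat) \<Rightarrow> complex) \<Rightarrow> (nat \<Rightarrow> nat) \<Rightarrow> complex" where
  "fourier_coeff r n f S = avg r n (\<lambda>T. f T * cnj (character r n S T))"

definition weight :: "nat \<Rightarrow> (nat \<Rightarrow> nat) \<Rightarrow> nat" where
  "weight n S = card {k\<in>{0..<n}. S k \<noteq> 0}"

definition level_part :: "nat \<Rightarrow> nat \<Rightarrow> (nat \<Rightarrow> bool) \<Rightarrow> ((nat \<Rightarrow> nat) \<Rightarrow> complex) \<Rightarrow> (nat \<Rightarrow> nat) \<Rightarrow> complex" where
  "level_part r n P f T = (\<Sum>S\<in>{S\<in>cube r n. P (weight n S)}. fourier_coeff r n f S * character r n S T)"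

definition level_eq :: "nat \<Rightarrow> nat \<Rightarrow> nat \<Rightarrow> ((nat \<Rightarrow> nat) \<Rightarrow> complex) \<Rightarrow> (nat \<Rightarrow> nat) \<Rightarrow> complex" where
  "level_eq r n k f = level_part r n (\<lambda>w. w = k) f"

definition level_gt :: "nat \<Rightarrow> nat \<Rightarrow> nat \<Rightarrow> ((nat \<Rightarrow> nat) \<Rightarrow> complex) \<Rightarrow> (nat \<Rightarrow> nat) \<Rightarrow> complex" where
  "level_gt r n k f = level_part r n (\<lambda>w. w > k) f"

definition norm2_sq :: "nat \<Rightarrow> nat \<Rightarrow> ((nat \<Rightarrow> nat) \<Rightarrow> complex) \<Rightarrow> real" where
  "norm2_sq r n g = avg r n (\<lambda>T. (cmod (g T))^2)"

definition dist01 :: "complex \<Rightarrow> real" where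
  "dist01 z = min (cmod z) (cmod (z - 1))"

end

theory Submission
  imports Defs
begin

text \<open>Since \<open>f\<close> has no Fourier weight above level one, \<open>f = c + h\<close> on the cube, where
  \<open>h = f\<^sup>=\<^sup>1\<close> is a sum of mean-zero functions \<open>g\<^sub>j(T\<^sub>j)\<close> of the independent coordinates.
  Expanding the fourth power and discarding the terms in which some index occurs only once gives
  \<open>E|h|\<^sup>4 \<le> 3 r (E|h|\<^sup>2)\<^sup>2\<close>. The constant \<open>c\<close> lies within \<open>1/4\<close> of a point \<open>a\<close> of \<open>{0, 1}\<close>,
  and pointwise \<open>d(f, {0, 1})\<^sup>2 \<ge> |c - a + h|\<^sup>2 - 64 |h|\<^sup>4\<close>. Averaging, with \<open>E h = 0\<close>, yields
  \<open>\<sigma> - 192 r \<sigma>\<^sup>2 \<le> \<epsilon>\<close> for \<open>\<sigma> = \<parallel>f\<^sup>=\<^sup>1\<parallel>\<^sup>2\<close>; since \<open>r \<sigma>\<close> is tiny, \<open>\<sigma> < 2 \<epsilon>\<close>.\<close>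

section \<open>Averages over the discrete cube\<close>

definition mean :: "nat \<Rightarrow> (nat \<Rightarrow> 'a::real_vector) \<Rightarrow> 'a" where
  "mean r \<phi> = (1 / real r) *\<^sub>R (\<Sum>t\<in>{0..<r}. \<phi> t)"

lemma card_cube: "card (cube r n) = r ^ n"
  by (simp add: cube_def card_PiE)

lemma finite_cube [simp]: "finite (cube r n)"
  by (simp add: cube_def finite_PiE)

lemma cube_coord_less: "T \<in> cube r n \<Longrightarrow> k < n \<Longrightarrow> T k < r"
  unfolding cube_def by auto

lemma cube_eqI:
  assumes "T \<in> cube r n" "T' \<in> cube r n" "\<And>k. k < n \<Longrightarrow> T k = T' k"
  shows "T = T'"
  using assms unfolding cube_def by (auto simp: PiE_def intro: extensionalityI)

lemma avg_sum: "avg r n (\<lambda>T. \<Sum>j\<in>J. F j T) = (\<Sum>j\<in>J. avg r n (F j))"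
  unfolding avg_def by (simp add: scaleR_sum_right sum.swap[of _ J])

lemma avg_add: "avg r n (\<lambda>T. F T + G T) = avg r n F + avg r n G"
  unfolding avg_def by (simp add: sum.distrib scaleR_add_right)

lemma avg_mult_left:
  fixes F :: "(nat \<Rightarrow> nat) \<Rightarrow> 'a::real_algebra"
  shows "avg r n (\<lambda>T. c * F T) = c * avg r n F"
  unfolding avg_def by (simp add: sum_distrib_left mult_scaleR_right)

lemma avg_of_real: "avg r n (\<lambda>T. of_real (F T)) = (of_real (avg r n F) :: 'a::real_algebra_1)"
  unfolding avg_def scaleR_conv_of_real by (simp flip: of_real_sum of_real_mult)

lemma avg_Re: "avg r n (\<lambda>T. Re (F T)) = Re (avg r n F)"
  unfolding avg_def by (simp add: Re_sum)

lemma avg_const: "r > 0 \<Longrightarrow> avg r n (\<lambda>T. c) = c"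
  unfolding avg_def by (simp add: card_cube sum_constant_scaleR)

lemma avg_mono:
  fixes F G :: "(nat \<Rightarrow> nat) \<Rightarrow> real"
  assumes "\<And>T. T \<in> cube r n \<Longrightarrow> F T \<le> G T"
  shows "avg r n F \<le> avg r n G"
  unfolding avg_def using assms by (auto intro!: divide_right_mono sum_mono)

lemma avg_nonneg:
  fixes F :: "(nat \<Rightarrow> nat) \<Rightarrow> real"
  assumes "\<And>T. T \<in> cube r n \<Longrightarrow> 0 \<le> F T"
  shows "0 \<le> avg r n F"
  unfolding avg_def using assms by (auto intro!: sum_nonneg divide_nonneg_nonneg)

lemma norm_avg_le: "norm (avg r n F) \<le> avg r n (\<lambda>T. norm (F T))"
  unfolding avg_def by (auto intro!: divide_right_mono norm_sum)

lemma norm2_sq_nonneg: "0 \<le> norm2_sq r n g"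
  unfolding norm2_sq_def by (intro avg_nonneg) simp

lemma mean_const_1: "r > 0 \<Longrightarrow> mean r (\<lambda>t. 1::'a::real_normed_field) = 1"
  unfolding mean_def by (simp add: sum_constant_scaleR scaleR_conv_of_real flip: of_real_mult)

lemma mean_of_real: "mean r (\<lambda>t. of_real (\<phi> t)) = (of_real (mean r \<phi>) :: 'a::real_algebra_1)"
  unfolding mean_def scaleR_conv_of_real by (simp flip: of_real_sum of_real_mult)

lemma mean_cnj: "mean r (\<lambda>t. cnj (\<phi> t)) = cnj (mean r \<phi>)"
  unfolding mean_def scaleR_conv_of_real by simp

lemma mean_mult_left: "mean r (\<lambda>t. c * \<phi> t) = c * (mean r \<phi> :: real)"
  unfolding mean_def by (simp add: sum_distrib_left)

lemma mean_mono:
  fixes \<phi> \<psi> :: "nat \<Rightarrow> real"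
  assumes "\<And>t. t < r \<Longrightarrow> \<phi> t \<le> \<psi> t"
  shows "mean r \<phi> \<le> mean r \<psi>"
  unfolding mean_def using assms by (auto intro!: divide_right_mono sum_mono)

lemma mean_nonneg: "(\<And>t. 0 \<le> \<phi> t) \<Longrightarrow> 0 \<le> mean r (\<phi> :: nat \<Rightarrow> real)"
  unfolding mean_def by (auto intro!: sum_nonneg divide_nonneg_nonneg)

lemma le_card_mult_mean:
  fixes \<phi> :: "nat \<Rightarrow> real"
  assumes "\<And>t. 0 \<le> \<phi> t" and "t < r"
  shows "\<phi> t \<le> real r * mean r \<phi>"
proof -
  have "\<phi> t \<le> (\<Sum>s\<in>{0..<r}. \<phi> s)"
    using assms by (intro member_le_sum) auto
  then show ?thesis
    using assms(2) unfolding mean_def by simp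
qed

lemma avg_prod_coords:
  fixes \<phi> :: "nat \<Rightarrow> nat \<Rightarrow> 'a::real_normed_field"
  shows "avg r n (\<lambda>T. \<Prod>i\<in>{0..<n}. \<phi> i (T i)) = (\<Prod>i\<in>{0..<n}. mean r (\<phi> i))"
proof -
  have "(\<Sum>T\<in>cube r n. \<Prod>i\<in>{0..<n}. \<phi> i (T i)) = (\<Prod>i\<in>{0..<n}. \<Sum>t\<in>{0..<r}. \<phi> i t)"
    unfolding cube_def by (rule prod_sum_PiE[symmetric]) auto
  then show ?thesis
    unfolding avg_def mean_def card_cube scaleR_conv_of_real by (simp add: prod_dividef)
qed

text \<open>Independence of the coordinates: a product of functions of distinct coordinates is padded
  with ones to a product over all coordinates, to which \<open>avg_prod_coords\<close> applies.\<close>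

lemma avg_coord:
  fixes a :: "nat \<Rightarrow> 'a::real_normed_field"
  assumes "r > 0" "j < n"
  shows "avg r n (\<lambda>T. a (T j)) = mean r a"
proof -
  have "avg r n (\<lambda>T. a (T j)) = avg r n (\<lambda>T. \<Prod>i\<in>{0..<n}. (if i = j then a (T i) else 1))"
    using assms by (simp add: prod.delta)
  also have "\<dots> = (\<Prod>i\<in>{0..<n}. mean r (\<lambda>t. if i = j then a t else 1))"
    by (rule avg_prod_coords)
  also have "\<dots> = (\<Prod>i\<in>{0..<n}. if i = j then mean r a else 1)"
    using assms by (intro prod.cong) (auto simp: mean_const_1)
  also have "\<dots> = mean r a"
    using assms by (simp add: prod.delta)
  finally show ?thesis .
qed

lemma avg_coord_mult_coord:
  fixes a b :: "nat \<Rightarrow> 'a::real_normed_field"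
  assumes "r > 0" "j < n" "k < n" "j \<noteq> k"
  shows "avg r n (\<lambda>T. a (T j) * b (T k)) = mean r a * mean r b"
proof -
  have "avg r n (\<lambda>T. a (T j) * b (T k))
      = avg r n (\<lambda>T. \<Prod>i\<in>{0..<n}. (if i = j then a (T i) else 1) * (if i = k then b (T i) else 1))"
    using assms by (simp add: prod.distrib prod.delta)
  also have "\<dots> = (\<Prod>i\<in>{0..<n}. mean r (\<lambda>t. (if i = j then a t else 1) * (if i = k then b t else 1)))"
    by (rule avg_prod_coords)
  also have "\<dots> = (\<Prod>i\<in>{0..<n}. (if i = j then mean r a else 1) * (if i = k then mean r b else 1))"
    using assms by (intro prod.cong) (auto simp: mean_const_1)
  also have "\<dots> = mean r a * mean r b"
    using assms by (simp add: prod.distrib prod.delta)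
  finally show ?thesis .
qed

lemma avg_coord_mult_eq_0:
  fixes a b c d :: "nat \<Rightarrow> 'a::real_normed_field"
  assumes "r > 0" "j < n" "k < n" "l < n" "m < n" "j \<noteq> k" "j \<noteq> l" "j \<noteq> m"
    and "mean r a = 0"
  shows "avg r n (\<lambda>T. a (T j) * b (T k) * c (T l) * d (T m)) = 0"
proof -
  define \<phi> where "\<phi> i t = (if i = j then a t else 1) * (if i = k then b t else 1)
      * (if i = l then c t else 1) * (if i = m then d t else 1)" for i t
  have "avg r n (\<lambda>T. a (T j) * b (T k) * c (T l) * d (T m))
      = avg r n (\<lambda>T. \<Prod>i\<in>{0..<n}. \<phi> i (T i))"
    using assms unfolding \<phi>_def by (simp add: prod.distrib prod.delta)
  also have "\<dots> = (\<Prod>i\<in>{0..<n}. mean r (\<phi> i))"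
    by (rule avg_prod_coords)
  also have "\<dots> = 0"
    using assms unfolding \<phi>_def by (intro prod_zero) (auto intro!: bexI[of _ j])
  finally show ?thesis .
qed

lemma avg_coord_mult_coord_le:
  fixes u v :: "nat \<Rightarrow> real"
  assumes r: "r > 0" and "p < n" "q < n" and u: "\<And>t. 0 \<le> u t" and v: "\<And>t. 0 \<le> v t"
  shows "avg r n (\<lambda>T. u (T p) * v (T q)) \<le> real r * mean r u * mean r v"
proof (cases "p = q")
  case True
  have "avg r n (\<lambda>T. u (T p) * v (T q)) = mean r (\<lambda>t. u t * v t)"
    using True avg_coord[OF r \<open>p < n\<close>, of "\<lambda>t. u t * v t"] by simp
  also have "\<dots> \<le> mean r (\<lambda>t. (real r * mean r u) * v t)"
    using u v by (intro mean_mono mult_right_mono le_card_mult_mean)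
  also have "\<dots> = real r * mean r u * mean r v"
    by (rule mean_mult_left)
  finally show ?thesis .
next
  case False
  have "avg r n (\<lambda>T. u (T p) * v (T q)) = mean r u * mean r v"
    using False assms by (intro avg_coord_mult_coord)
  also have "\<dots> \<le> real r * (mean r u * mean r v)"
  proof -
    have "0 \<le> mean r u * mean r v"
      using u v by (simp add: mean_nonneg)
    from mult_right_mono[OF _ this, of 1 "real r"] show ?thesis
      using r by simp
  qed
  finally show ?thesis by (simp add: mult.assoc)
qed

section \<open>Moments of sums of independent coordinate functions\<close>

lemma of_real_norm_sum_pow4:
  fixes a :: "'i \<Rightarrow> complex"
  shows "complex_of_real ((cmod (\<Sum>j\<in>I. a j))^4)
    = (\<Sum>j\<in>I. \<Sum>k\<in>I. \<Sum>l\<in>I. \<Sum>m\<in>I. a j * (a k * (cnj (a l) * cnj (a m))))"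
proof -
  define s where "s = (\<Sum>j\<in>I. a j)"
  have "complex_of_real ((cmod s)^4) = (complex_of_real ((cmod s)^2))^2"
    by simp
  also have "\<dots> = s * (s * (cnj s * cnj s))"
    by (simp only: complex_norm_square) (simp add: power2_eq_square mult_ac)
  also have "cnj s * cnj s = (\<Sum>l\<in>I. \<Sum>m\<in>I. cnj (a l) * cnj (a m))"
    unfolding s_def by (simp only: cnj_sum sum_product)
  also have "s * \<dots> = (\<Sum>k\<in>I. \<Sum>l\<in>I. \<Sum>m\<in>I. a k * (cnj (a l) * cnj (a m)))"
    unfolding s_def by (simp only: sum_product) (simp only: sum_distrib_left)
  also have "s * \<dots> = (\<Sum>j\<in>I. \<Sum>k\<in>I. \<Sum>l\<in>I. \<Sum>m\<in>I. a j * (a k * (cnj (a l) * cnj (a m))))"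
    unfolding s_def by (simp only: sum_product) (simp only: sum_distrib_left)
  finally show ?thesis
    unfolding s_def .
qed

lemma norm_sum4_le:
  "norm (\<Sum>j\<in>I. \<Sum>k\<in>I. \<Sum>l\<in>I. \<Sum>m\<in>I. F j k l m)
    \<le> (\<Sum>j\<in>I. \<Sum>k\<in>I. \<Sum>l\<in>I. \<Sum>m\<in>I. norm (F j k l m))"
  by (intro order_trans[OF norm_sum] sum_mono norm_sum)

lemma sum4_pairings:
  fixes Q :: "'i \<Rightarrow> 'i \<Rightarrow> real"
  assumes I: "finite I"
  shows "(\<Sum>j\<in>I. \<Sum>k\<in>I. \<Sum>l\<in>I. \<Sum>m\<in>I.
        (if k = j then if m = l then Q j l else 0 else 0) + (if l = j then if m = k then Q j k else 0 else 0)
      + (if m = j then if l = k then Q j k else 0 else 0))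
    = 3 * (\<Sum>j\<in>I. \<Sum>k\<in>I. Q j k)"
proof -
  have sum_m: "(\<Sum>m\<in>I. (if k = j then if m = l then Q j l else 0 else 0) + (if l = j then if m = k then Q j k else 0 else 0)
      + (if m = j then if l = k then Q j k else 0 else 0))
    = (if k = j then Q j l else 0) + (if l = j then Q j k else 0) + (if l = k then Q j k else 0)"
    if "j \<in> I" "k \<in> I" "l \<in> I" for j k l
    using that I by (simp add: sum.distrib)
  have sum_l: "(\<Sum>l\<in>I. (if k = j then Q j l else 0) + (if l = j then Q j k else 0)
      + (if l = k then Q j k else 0))
    = (if k = j then (\<Sum>l\<in>I. Q j l) else 0) + 2 * Q j k"
    if "j \<in> I" "k \<in> I" for j k
    using that I by (simp add: sum.distrib)
  have sum_k: "(\<Sum>k\<in>I. (if k = j then (\<Sum>l\<in>I. Q j l) else 0) + 2 * Q j k) = 3 * (\<Sum>k\<in>I. Q j k)"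
    if "j \<in> I" for j
    using that I by (simp add: sum.distrib flip: sum_distrib_left)
  show ?thesis
    using sum_m sum_l sum_k by (simp add: sum_distrib_left)
qed

definition joint_sq_moment :: "nat \<Rightarrow> nat \<Rightarrow> (nat \<Rightarrow> nat \<Rightarrow> complex) \<Rightarrow> nat \<Rightarrow> nat \<Rightarrow> real" where
  "joint_sq_moment r n g p q = avg r n (\<lambda>T. (cmod (g p (T p)))^2 * (cmod (g q (T q)))^2)"

context
  fixes r n :: nat and g :: "nat \<Rightarrow> nat \<Rightarrow> complex"
  assumes r_pos: "r > 0" and mean_coord_eq_0: "\<And>j. j < n \<Longrightarrow> mean r (g j) = 0"
begin

lemma avg_sum_coords_eq_0: "avg r n (\<lambda>T. \<Sum>j\<in>{0..<n}. g j (T j)) = 0"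
  by (simp add: avg_sum avg_coord r_pos mean_coord_eq_0)

lemma avg_norm_sq_sum_coords:
  "avg r n (\<lambda>T. (cmod (\<Sum>j\<in>{0..<n}. g j (T j)))^2) = (\<Sum>j\<in>{0..<n}. mean r (\<lambda>t. (cmod (g j t))^2))"
proof -
  have cross: "avg r n (\<lambda>T. g j (T j) * cnj (g k (T k)))
      = (if k = j then complex_of_real (mean r (\<lambda>t. (cmod (g j t))^2)) else 0)"
    if "j < n" "k < n" for j k
  proof (cases "k = j")
    case True
    then show ?thesis
      using that r_pos avg_coord[of r j n "\<lambda>t. g j t * cnj (g j t)"]
      by (simp add: complex_norm_square mean_of_real[symmetric] flip: of_real_power)
  next
    case False
    then show ?thesis
      using that r_pos mean_coord_eq_0
      by (simp add: avg_coord_mult_coord[where a = "g j" and b = "\<lambda>t. cnj (g k t)"] mean_cnj)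
  qed
  have "complex_of_real (avg r n (\<lambda>T. (cmod (\<Sum>j\<in>{0..<n}. g j (T j)))^2))
      = avg r n (\<lambda>T. \<Sum>j\<in>{0..<n}. \<Sum>k\<in>{0..<n}. g j (T j) * cnj (g k (T k)))"
    by (simp only: avg_of_real[symmetric] complex_norm_square cnj_sum sum_product)
  also have "\<dots> = (\<Sum>j\<in>{0..<n}. \<Sum>k\<in>{0..<n}. avg r n (\<lambda>T. g j (T j) * cnj (g k (T k))))"
    by (simp add: avg_sum)
  also have "\<dots> = complex_of_real (\<Sum>j\<in>{0..<n}. mean r (\<lambda>t. (cmod (g j t))^2))"
    by (simp add: cross)
  finally show ?thesis
    by (simp only: of_real_eq_iff)
qed

text \<open>Unless the four indices pair up, one of them occurs only once; that coordinate is independent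
  of the others and has mean zero.\<close>

lemma avg_coord_quartic_eq_0:
  assumes jn: "j < n" and kn: "k < n" and ln: "l < n" and mn: "m < n"
    and unpaired: "\<not> ((k = j \<and> m = l) \<or> (l = j \<and> m = k) \<or> (m = j \<and> l = k))"
  shows "avg r n (\<lambda>T. g j (T j) * (g k (T k) * (cnj (g l (T l)) * cnj (g m (T m))))) = 0"
proof -
  have mean_cnj_coord: "mean r (\<lambda>t. cnj (g i t)) = 0" if "i < n" for i
    using mean_coord_eq_0[OF that] by (simp add: mean_cnj)
  from unpaired consider "j \<noteq> k" "j \<noteq> l" "j \<noteq> m" | "k \<noteq> j" "k \<noteq> l" "k \<noteq> m"
    | "l \<noteq> j" "l \<noteq> k" "l \<noteq> m" | "m \<noteq> j" "m \<noteq> k" "m \<noteq> l"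
    by blast
  then show ?thesis
  proof cases
    case 1
    then show ?thesis
      using avg_coord_mult_eq_0[OF r_pos jn kn ln mn 1 mean_coord_eq_0[OF jn],
          of "g k" "\<lambda>t. cnj (g l t)" "\<lambda>t. cnj (g m t)"]
      by (simp add: mult_ac)
  next
    case 2
    then show ?thesis
      using avg_coord_mult_eq_0[OF r_pos kn jn ln mn 2 mean_coord_eq_0[OF kn],
          of "g j" "\<lambda>t. cnj (g l t)" "\<lambda>t. cnj (g m t)"]
      by (simp add: mult_ac)
  next
    case 3
    then show ?thesis
      using avg_coord_mult_eq_0[OF r_pos ln jn kn mn 3 mean_cnj_coord[OF ln],
          of "g j" "g k" "\<lambda>t. cnj (g m t)"]
      by (simp add: mult_ac)
  next
    case 4
    then show ?thesis
      using avg_coord_mult_eq_0[OF r_pos mn jn kn ln 4 mean_cnj_coord[OF mn],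
          of "g j" "g k" "\<lambda>t. cnj (g l t)"]
      by (simp add: mult_ac)
  qed
qed

lemma norm_avg_coord_quartic_le:
  assumes "j < n" "k < n" "l < n" "m < n"
  shows "cmod (avg r n (\<lambda>T. g j (T j) * (g k (T k) * (cnj (g l (T l)) * cnj (g m (T m))))))
    \<le> (if k = j then if m = l then joint_sq_moment r n g j l else 0 else 0)
     + (if l = j then if m = k then joint_sq_moment r n g j k else 0 else 0)
     + (if m = j then if l = k then joint_sq_moment r n g j k else 0 else 0)"
    (is "cmod ?t \<le> ?B")
proof -
  have nonneg: "0 \<le> joint_sq_moment r n g p q" for p q
    unfolding joint_sq_moment_def by (intro avg_nonneg) simp
  show ?thesis
  proof (cases "(k = j \<and> m = l) \<or> (l = j \<and> m = k) \<or> (m = j \<and> l = k)")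
    case paired: True
    let ?A = "avg r n (\<lambda>T. cmod (g j (T j)) * (cmod (g k (T k)) * (cmod (g l (T l)) * cmod (g m (T m)))))"
    have "cmod ?t \<le> ?A"
      using norm_avg_le[of r n "\<lambda>T. g j (T j) * (g k (T k) * (cnj (g l (T l)) * cnj (g m (T m))))"]
      by (simp add: norm_mult)
    also have "?A \<le> ?B"
      using paired nonneg unfolding joint_sq_moment_def
      by (elim disjE conjE) (auto simp: power2_eq_square mult_ac)
    finally show ?thesis .
  next
    case False
    then show ?thesis
      using avg_coord_quartic_eq_0[OF assms] nonneg by simp
  qed
qed

lemma avg_norm_pow4_sum_coords_le:
  "avg r n (\<lambda>T. (cmod (\<Sum>j\<in>{0..<n}. g j (T j)))^4)
     \<le> 3 * real r * (\<Sum>j\<in>{0..<n}. mean r (\<lambda>t. (cmod (g j t))^2))^2"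
proof -
  define v where "v j = mean r (\<lambda>t. (cmod (g j t))^2)" for j
  define t where "t j k l m = avg r n (\<lambda>T. g j (T j) * (g k (T k) * (cnj (g l (T l)) * cnj (g m (T m)))))"
    for j k l m
  have expand: "complex_of_real (avg r n (\<lambda>T. (cmod (\<Sum>j\<in>{0..<n}. g j (T j)))^4))
      = (\<Sum>j\<in>{0..<n}. \<Sum>k\<in>{0..<n}. \<Sum>l\<in>{0..<n}. \<Sum>m\<in>{0..<n}. t j k l m)"
    unfolding t_def by (subst avg_of_real[symmetric]) (simp only: of_real_norm_sum_pow4 avg_sum)
  have "avg r n (\<lambda>T. (cmod (\<Sum>j\<in>{0..<n}. g j (T j)))^4)
      \<le> cmod (complex_of_real (avg r n (\<lambda>T. (cmod (\<Sum>j\<in>{0..<n}. g j (T j)))^4)))"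
    by (rule order_trans[OF _ complex_Re_le_cmod]) simp
  also have "\<dots> \<le> (\<Sum>j\<in>{0..<n}. \<Sum>k\<in>{0..<n}. \<Sum>l\<in>{0..<n}. \<Sum>m\<in>{0..<n}. cmod (t j k l m))"
    unfolding expand by (rule norm_sum4_le)
  also have "\<dots> \<le> (\<Sum>j\<in>{0..<n}. \<Sum>k\<in>{0..<n}. \<Sum>l\<in>{0..<n}. \<Sum>m\<in>{0..<n}.
        (if k = j then if m = l then joint_sq_moment r n g j l else 0 else 0)
      + (if l = j then if m = k then joint_sq_moment r n g j k else 0 else 0)
      + (if m = j then if l = k then joint_sq_moment r n g j k else 0 else 0))"
    unfolding t_def by (intro sum_mono norm_avg_coord_quartic_le) auto
  also have "\<dots> = 3 * (\<Sum>j\<in>{0..<n}. \<Sum>k\<in>{0..<n}. joint_sq_moment r n g j k)"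
    by (rule sum4_pairings) simp
  also have "\<dots> \<le> 3 * (\<Sum>j\<in>{0..<n}. \<Sum>k\<in>{0..<n}. real r * v j * v k)"
    unfolding v_def joint_sq_moment_def
    by (intro mult_left_mono sum_mono avg_coord_mult_coord_le r_pos) auto
  also have "\<dots> = 3 * real r * (\<Sum>j\<in>{0..<n}. v j)^2"
    by (simp add: power2_eq_square sum_product sum_distrib_left mult_ac)
  finally show ?thesis
    unfolding v_def .
qed

end

section \<open>Characters and the level-one part\<close>

definition unit_root :: "nat \<Rightarrow> int \<Rightarrow> complex" where
  "unit_root r x = exp (2 * pi * \<i> * of_int x / of_nat r)"

lemma unit_root_add: "unit_root r (x + y) = unit_root r x * unit_root r y"
  unfolding unit_root_def by (simp add: exp_add[symmetric] distrib_left add_divide_distrib)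

lemma unit_root_0 [simp]: "unit_root r 0 = 1"
  unfolding unit_root_def by simp

lemma cnj_unit_root: "cnj (unit_root r x) = unit_root r (- x)"
  unfolding unit_root_def by (simp add: exp_cnj)

lemma unit_root_mult_of_nat: "unit_root r (x * int s) = unit_root r x ^ s"
proof -
  have "unit_root r (x * int s) = exp (of_nat s * (2 * pi * \<i> * of_int x / of_nat r))"
    unfolding unit_root_def by (simp add: mult_ac)
  then show ?thesis
    unfolding unit_root_def by (simp only: exp_of_nat_mult)
qed

lemma unit_root_sum: "finite K \<Longrightarrow> unit_root r (\<Sum>k\<in>K. x k) = (\<Prod>k\<in>K. unit_root r (x k))"
  by (induction K rule: finite_induct) (simp_all add: unit_root_add)

lemma unit_root_eq_1_iff:
  assumes "r > 0"
  shows "unit_root r x = 1 \<longleftrightarrow> int r dvd x"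
proof
  assume "unit_root r x = 1"
  then obtain m :: int where "2 * pi * of_int x / of_nat r = of_int (2 * m) * pi"
    unfolding unit_root_def exp_eq_1 by auto
  then have "real_of_int x = real_of_int (m * int r)"
    using assms by (simp add: field_simps)
  then show "int r dvd x"
    by (simp only: of_int_eq_iff) simp
next
  assume "int r dvd x"
  then obtain m where "x = int r * m" ..
  then show "unit_root r x = 1"
    using assms unfolding unit_root_def exp_eq_1 by (auto intro!: exI[of _ m])
qed

lemma sum_unit_root_mult_eq_0:
  assumes r: "r > 0" and "\<not> int r dvd x"
  shows "(\<Sum>s\<in>{0..<r}. unit_root r (x * int s)) = 0"
proof -
  have "unit_root r x \<noteq> 1"
    using assms by (simp add: unit_root_eq_1_iff)
  moreover have "unit_root r x ^ r = 1"
    using r by (simp flip: unit_root_mult_of_nat add: unit_root_eq_1_iff)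
  ultimately show ?thesis
    by (simp add: unit_root_mult_of_nat atLeast0LessThan geometric_sum)
qed

lemma sum_unit_root_diff_mult:
  assumes r: "r > 0" and "a < r" "b < r"
  shows "(\<Sum>s\<in>{0..<r}. unit_root r ((int a - int b) * int s)) = (if a = b then of_nat r else 0)"
proof (cases "a = b")
  case False
  have "\<not> int r dvd (int a - int b)"
  proof
    assume "int r dvd (int a - int b)"
    then have "\<bar>int r\<bar> \<le> \<bar>int a - int b\<bar>"
      using False by (intro dvd_imp_le_int) auto
    then show False
      using assms by auto
  qed
  then show ?thesis
    using False sum_unit_root_mult_eq_0[OF r] by simp
qed simp

lemma character_eq_unit_root: "character r n S T = unit_root r (\<Sum>k\<in>{0..<n}. int (S k) * int (T k))"
  unfolding character_def unit_root_def by (simp add: atLeast0LessThan)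

lemma sum_character_mult_cnj:
  assumes r: "r > 0" and T: "T \<in> cube r n" and T': "T' \<in> cube r n"
  shows "(\<Sum>S\<in>cube r n. character r n S T * cnj (character r n S T'))
     = (if T = T' then of_nat (r ^ n) else 0)"
proof -
  have "character r n S T * cnj (character r n S T')
      = (\<Prod>k\<in>{0..<n}. unit_root r ((int (T k) - int (T' k)) * int (S k)))" for S
  proof -
    have "(\<Sum>k\<in>{0..<n}. int (S k) * int (T k)) + - (\<Sum>k\<in>{0..<n}. int (S k) * int (T' k))
        = (\<Sum>k\<in>{0..<n}. (int (T k) - int (T' k)) * int (S k))"
      by (simp add: sum_subtractf[symmetric] algebra_simps)
    then show ?thesis
      unfolding character_eq_unit_root cnj_unit_root unit_root_add[symmetric] by (simp add: unit_root_sum)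
  qed
  then have "(\<Sum>S\<in>cube r n. character r n S T * cnj (character r n S T'))
      = (\<Sum>S\<in>cube r n. \<Prod>k\<in>{0..<n}. unit_root r ((int (T k) - int (T' k)) * int (S k)))"
    by simp
  also have "\<dots> = (\<Prod>k\<in>{0..<n}. \<Sum>s\<in>{0..<r}. unit_root r ((int (T k) - int (T' k)) * int s))"
    unfolding cube_def by (rule prod_sum_PiE[symmetric]) auto
  also have "\<dots> = (\<Prod>k\<in>{0..<n}. if T k = T' k then of_nat r else 0)"
    using cube_coord_less[OF T] cube_coord_less[OF T']
    by (intro prod.cong refl sum_unit_root_diff_mult[OF r]) auto
  also have "\<dots> = (if T = T' then of_nat (r ^ n) else 0)"
  proof (cases "T = T'")
    case False
    then obtain k where "k < n" "T k \<noteq> T' k"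
      using cube_eqI[OF T T'] by blast
    then show ?thesis
      using False by (intro trans[OF prod_zero]) auto
  qed simp
  finally show ?thesis .
qed

lemma fourier_inversion:
  assumes r: "r > 0" and T: "T \<in> cube r n"
  shows "f T = (\<Sum>S\<in>cube r n. fourier_coeff r n f S * character r n S T)"
proof -
  define N where "N = real (r ^ n)"
  have "(\<Sum>S\<in>cube r n. fourier_coeff r n f S * character r n S T)
      = (\<Sum>S\<in>cube r n. \<Sum>T'\<in>cube r n. of_real (1 / N) * (f T' * (character r n S T * cnj (character r n S T'))))"
    unfolding fourier_coeff_def avg_def N_def card_cube scaleR_conv_of_real
    by (simp add: sum_distrib_left sum_distrib_right mult_ac)
  also have "\<dots> = (\<Sum>T'\<in>cube r n. of_real (1 / N) * (f T' * (\<Sum>S\<in>cube r n. character r n S T * cnj (character r n S T'))))"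
    by (subst sum.swap) (simp add: sum_distrib_left)
  also have "\<dots> = (\<Sum>T'\<in>cube r n. if T' = T then of_real (1 / N) * (f T * of_nat (r ^ n)) else 0)"
    using sum_character_mult_cnj[OF r T] by (intro sum.cong refl) auto
  also have "\<dots> = f T"
    using T r unfolding N_def by simp
  finally show ?thesis ..
qed

lemma character_weight_0: "weight n S = 0 \<Longrightarrow> character r n S T = 1"
  unfolding weight_def character_eq_unit_root by simp

lemma fourier_expansion_by_level:
  assumes "r > 0" and "T \<in> cube r n"
  shows "f T = level_part r n (\<lambda>w. w = 0) f T + level_eq r n 1 f T + level_gt r n 1 f T"
proof -
  define X where "X S = fourier_coeff r n f S * character r n S T" for S
  have "f T = (\<Sum>S\<in>cube r n. X S)"
    unfolding X_def using assms by (rule fourier_inversion)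
  also have "\<dots> = (\<Sum>S\<in>cube r n. (if weight n S = 0 then X S else 0)
      + (if weight n S = 1 then X S else 0) + (if weight n S > 1 then X S else 0))"
    by (intro sum.cong) auto
  also have "\<dots> = level_part r n (\<lambda>w. w = 0) f T + level_eq r n 1 f T + level_gt r n 1 f T"
    unfolding level_eq_def level_gt_def level_part_def X_def by (simp add: sum.distrib sum.inter_filter)
  finally show ?thesis .
qed

lemma level_part_0_const:
  "level_part r n (\<lambda>w. w = 0) f T = (\<Sum>S\<in>{S\<in>cube r n. weight n S = 0}. fourier_coeff r n f S)"
  unfolding level_part_def by (intro sum.cong) (auto simp: character_weight_0)

lemma level_gt_1_eq_0_imp_const_plus_level_1:
  assumes "r > 0" and "\<forall>T\<in>cube r n. level_gt r n 1 f T = 0"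
  obtains c where "\<And>T. T \<in> cube r n \<Longrightarrow> f T = c + level_eq r n 1 f T"
  using assms fourier_expansion_by_level[OF \<open>r > 0\<close>, of _ n f] by (auto simp: level_part_0_const)

definition level_1_coord :: "nat \<Rightarrow> nat \<Rightarrow> ((nat \<Rightarrow> nat) \<Rightarrow> complex) \<Rightarrow> nat \<Rightarrow> nat \<Rightarrow> complex" where
  "level_1_coord r n f j t = (\<Sum>S\<in>{S\<in>cube r n. weight n S = 1}.
      if S j \<noteq> 0 then fourier_coeff r n f S * unit_root r (int (S j) * int t) else 0)"

lemma level_eq_1_eq_sum_coords: "level_eq r n 1 f T = (\<Sum>j\<in>{0..<n}. level_1_coord r n f j (T j))"
proof -
  have single: "(\<Sum>j\<in>{0..<n}. if S j \<noteq> 0 then fourier_coeff r n f S * unit_root r (int (S j) * int (T j)) else 0)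
      = fourier_coeff r n f S * character r n S T"
    if "weight n S = 1" for S
  proof -
    from that obtain j0 where supp: "{k\<in>{0..<n}. S k \<noteq> 0} = {j0}"
      unfolding weight_def by (rule card_1_singletonE)
    have "(\<Sum>k\<in>{0..<n}. int (S k) * int (T k)) = (\<Sum>k\<in>{k\<in>{0..<n}. S k \<noteq> 0}. int (S k) * int (T k))"
      by (rule sum.mono_neutral_right) auto
    then have "character r n S T = unit_root r (int (S j0) * int (T j0))"
      unfolding character_eq_unit_root supp by simp
    moreover have "(\<Sum>j\<in>{0..<n}. if S j \<noteq> 0 then fourier_coeff r n f S * unit_root r (int (S j) * int (T j)) else 0)
        = (\<Sum>j\<in>{k\<in>{0..<n}. S k \<noteq> 0}. fourier_coeff r n f S * unit_root r (int (S j) * int (T j)))"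
      by (rule sum.inter_filter[symmetric]) simp
    ultimately show ?thesis
      unfolding supp by simp
  qed
  have "(\<Sum>j\<in>{0..<n}. level_1_coord r n f j (T j))
      = (\<Sum>S\<in>{S\<in>cube r n. weight n S = 1}. \<Sum>j\<in>{0..<n}.
          if S j \<noteq> 0 then fourier_coeff r n f S * unit_root r (int (S j) * int (T j)) else 0)"
    unfolding level_1_coord_def by (rule sum.swap)
  also have "\<dots> = level_eq r n 1 f T"
    unfolding level_eq_def level_part_def by (intro sum.cong refl single) auto
  finally show ?thesis ..
qed

lemma mean_level_1_coord:
  assumes r: "r > 0" and "j < n"
  shows "mean r (level_1_coord r n f j) = 0"
proof -
  have vanish: "(\<Sum>s\<in>{0..<r}. unit_root r (int (S j) * int s)) = 0"
    if "S \<in> cube r n" "S j \<noteq> 0" for S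
  proof (rule sum_unit_root_mult_eq_0[OF r])
    have "S j < r"
      using that \<open>j < n\<close> by (simp add: cube_coord_less)
    then show "\<not> int r dvd int (S j)"
      using \<open>S j \<noteq> 0\<close> by (auto dest: dvd_imp_le)
  qed
  have "(\<Sum>t\<in>{0..<r}. level_1_coord r n f j t)
      = (\<Sum>S\<in>{S\<in>cube r n. weight n S = 1}. if S j \<noteq> 0 then
          fourier_coeff r n f S * (\<Sum>s\<in>{0..<r}. unit_root r (int (S j) * int s)) else 0)"
    unfolding level_1_coord_def by (subst sum.swap) (auto intro!: sum.cong simp: sum_distrib_left)
  also have "\<dots> = 0"
    using vanish by (intro sum.neutral) auto
  finally show ?thesis
    unfolding mean_def by simp
qed

lemma avg_level_eq_1: "r > 0 \<Longrightarrow> avg r n (level_eq r n 1 f) = 0"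
  unfolding level_eq_1_eq_sum_coords by (simp add: avg_sum_coords_eq_0 mean_level_1_coord)

lemma avg_norm_pow4_level_eq_1_le:
  assumes "r > 0"
  shows "avg r n (\<lambda>T. (cmod (level_eq r n 1 f T))^4) \<le> 3 * real r * (norm2_sq r n (level_eq r n 1 f))^2"
  using avg_norm_pow4_sum_coords_le[OF assms mean_level_1_coord[OF assms]]
    avg_norm_sq_sum_coords[OF assms mean_level_1_coord[OF assms]]
  unfolding norm2_sq_def level_eq_1_eq_sum_coords by simp

section \<open>Distance to \<open>{0, 1}\<close>\<close>

lemma dist01_nonneg: "0 \<le> dist01 z"
  unfolding dist01_def by simp

lemma dist01_attained:
  obtains a where "a = 0 \<or> a = 1" "dist01 z = cmod (z - a)"
  unfolding dist01_def by (metis diff_zero min_def)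

lemma dist01_le_add_norm: "dist01 z \<le> dist01 (z + x) + cmod x"
proof -
  obtain a where a: "a = 0 \<or> a = 1" and za: "dist01 (z + x) = cmod (z + x - a)"
    by (rule dist01_attained)
  have "dist01 z \<le> cmod (z - a)"
    using a unfolding dist01_def by auto
  also have "\<dots> \<le> cmod (z + x - a) + cmod x"
    using norm_triangle_ineq4[of "z + x - a" x] by simp
  finally show ?thesis
    using za by simp
qed

text \<open>Near a point of \<open>{0, 1}\<close> the distance is the distance to that point; far from it the
  perturbation \<open>x\<close> is large and the quartic term dominates.\<close>

lemma norm_sq_le_dist01_sq_add:
  assumes a: "a = 0 \<or> a = 1" and w: "cmod w < 1/4"
  shows "(cmod (w + x))^2 \<le> (dist01 (a + w + x))^2 + 64 * (cmod x)^4"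
proof (cases "cmod (w + x) \<le> 1/2")
  case True
  have "1 = cmod (a - (1 - a))"
    using a by auto
  also have "\<dots> \<le> cmod (a + w + x - (1 - a)) + cmod (w + x)"
    using norm_triangle_ineq4[of "a + w + x - (1 - a)" "w + x"] by simp
  finally have "cmod (w + x) \<le> cmod (a + w + x - (1 - a))"
    using True by linarith
  with a have "dist01 (a + w + x) = cmod (w + x)"
    unfolding dist01_def by (auto simp: min_def add.assoc add_diff_eq)
  then show ?thesis
    by simp
next
  case False
  with w norm_triangle_ineq[of w x] have x: "1/4 < cmod x" and wx: "cmod (w + x) \<le> 2 * cmod x"
    by linarith+
  have "(1/4)^2 \<le> (cmod x)^2"
    using x by (intro power_mono) auto
  then have "1/16 \<le> (cmod x)^2"
    by (simp add: power2_eq_square)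
  then have "4 * (cmod x)^2 \<le> 64 * (cmod x)^4"
    using mult_right_mono[of "1/16" "(cmod x)^2" "(cmod x)^2"] by (simp add: power4_eq_xxxx power2_eq_square)
  moreover have "(cmod (w + x))^2 \<le> 4 * (cmod x)^2"
    using power_mono[OF wx, of 2] by (simp add: power_mult_distrib)
  ultimately show ?thesis
    using zero_le_power2[of "dist01 (a + w + x)"] by linarith
qed

lemma dist01_const_sq_le:
  assumes r: "r > 0" and f: "\<And>T. T \<in> cube r n \<Longrightarrow> f T = c + h T"
  shows "(dist01 c)^2 \<le> 2 * norm2_sq r n (\<lambda>T. complex_of_real (dist01 (f T))) + 2 * norm2_sq r n h"
proof -
  have "(dist01 c)^2 \<le> 2 * (dist01 (f T))^2 + 2 * (cmod (h T))^2" if "T \<in> cube r n" for T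
  proof -
    have "dist01 c \<le> dist01 (f T) + cmod (h T)"
      using dist01_le_add_norm[of c "h T"] f[OF that] by simp
    then have "(dist01 c)^2 \<le> (dist01 (f T) + cmod (h T))^2"
      using dist01_nonneg by (intro power_mono) auto
    also have "\<dots> \<le> 2 * (dist01 (f T))^2 + 2 * (cmod (h T))^2"
      using zero_le_power2[of "dist01 (f T) - cmod (h T)"] unfolding power2_diff power2_sum by linarith
    finally show ?thesis .
  qed
  then have "avg r n (\<lambda>T. (dist01 c)^2) \<le> avg r n (\<lambda>T. 2 * (dist01 (f T))^2 + 2 * (cmod (h T))^2)"
    by (rule avg_mono)
  then show ?thesis
    unfolding norm2_sq_def by (simp add: avg_const[OF r] avg_add avg_mult_left)
qed

lemma norm2_sq_le_dist01_add_pow4: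
  assumes r: "r > 0" and f: "\<And>T. T \<in> cube r n \<Longrightarrow> f T = c + h T"
    and h: "avg r n h = 0" and c: "dist01 c < 1/4"
  shows "norm2_sq r n h
    \<le> norm2_sq r n (\<lambda>T. complex_of_real (dist01 (f T))) + 64 * avg r n (\<lambda>T. (cmod (h T))^4)"
proof -
  obtain a where a: "a = 0 \<or> a = 1" and ca: "dist01 c = cmod (c - a)"
    by (rule dist01_attained)
  define w where "w = c - a"
  have w: "cmod w < 1/4"
    using c ca unfolding w_def by simp
  have expand: "(cmod (w + z))^2 = (cmod w)^2 + (cmod z)^2 + 2 * Re (cnj w * z)" for z
    unfolding cmod_power2 by (simp add: power2_eq_square algebra_simps)
  have "(cmod w)^2 + norm2_sq r n h = (cmod w)^2 + norm2_sq r n h + 2 * Re (cnj w * avg r n h)"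
    using h by simp
  also have "\<dots> = avg r n (\<lambda>T. (cmod (w + h T))^2)"
    unfolding expand norm2_sq_def by (simp only: avg_add avg_const[OF r] avg_mult_left avg_Re)
  also have "\<dots> \<le> avg r n (\<lambda>T. (dist01 (f T))^2 + 64 * (cmod (h T))^4)"
    using norm_sq_le_dist01_sq_add[OF a w] f unfolding w_def by (intro avg_mono) simp
  also have "\<dots> = norm2_sq r n (\<lambda>T. complex_of_real (dist01 (f T))) + 64 * avg r n (\<lambda>T. (cmod (h T))^4)"
    unfolding norm2_sq_def by (simp add: avg_add avg_mult_left)
  finally show ?thesis
    using zero_le_power2[of "cmod w"] by linarith
qed

lemma less_double_if_sub_quadratic_le:
  fixes \<sigma> \<epsilon> K :: real
  assumes "0 \<le> \<sigma>" "0 < \<epsilon>" "\<sigma> - K * \<sigma>^2 \<le> \<epsilon>" "K * \<sigma> < 1/2"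
  shows "\<sigma> < 2 * \<epsilon>"
proof (cases "\<sigma> = 0")
  case False
  then have "\<sigma> * (K * \<sigma>) < \<sigma> * (1/2)"
    using assms by (intro mult_strict_left_mono) auto
  then show ?thesis
    using assms by (simp add: power2_eq_square mult_ac)
qed (use assms in simp)

lemma small_parameter_bounds:
  fixes r \<sigma> \<epsilon> :: real
  assumes "3 \<le> r" "0 \<le> \<sigma>" "\<sigma> < 10^4 * \<epsilon>" "\<epsilon> < 2 / (10^8 * r)"
  shows "0 < \<epsilon>" and "2 * \<epsilon> + 2 * \<sigma> < 1/16" and "192 * r * \<sigma> < 1/2"
proof -
  show \<epsilon>: "0 < \<epsilon>"
    using assms(2,3) by simp
  have \<sigma>: "\<sigma> < 10000 * \<epsilon>"
    using assms(3) by simp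
  have r\<epsilon>: "r * \<epsilon> < 2 / 100000000"
    using assms(1,4) by (simp add: field_simps)
  have "3 * \<epsilon> \<le> r * \<epsilon>"
    using assms(1) \<epsilon> by (intro mult_right_mono) auto
  with \<sigma> r\<epsilon> show "2 * \<epsilon> + 2 * \<sigma> < 1/16"
    by linarith
  have "r * \<sigma> < r * (10000 * \<epsilon>)"
    using \<sigma> assms(1) by (intro mult_strict_left_mono) auto
  with r\<epsilon> show "192 * r * \<sigma> < 1/2"
    by linarith
qed

theorem lemma3p2:
  fixes r n :: nat and f :: "(nat \<Rightarrow> nat) \<Rightarrow> complex" and \<epsilon> :: real
  assumes "r \<ge> 3" and "n \<ge> 1"
    and "\<forall>T\<in>cube r n. level_gt r n 1 f T = 0"
    and "norm2_sq r n (\<lambda>T. complex_of_real (dist01 (f T))) \<le> \<epsilon>"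
    and "norm2_sq r n (level_eq r n 1 f) < 10^4 * \<epsilon>"
    and "\<epsilon> < 2 / (10^8 * real r)"
  shows "norm2_sq r n (level_eq r n 1 f) < 2 * \<epsilon>"
proof -
  have r: "r > 0"
    using assms(1) by simp
  define h where "h = level_eq r n 1 f"
  define \<sigma> where "\<sigma> = norm2_sq r n h"
  obtain c where f: "\<And>T. T \<in> cube r n \<Longrightarrow> f T = c + h T"
    using level_gt_1_eq_0_imp_const_plus_level_1[OF r assms(3)] unfolding h_def by blast
  have "3 \<le> real r" "0 \<le> \<sigma>" "\<sigma> < 10^4 * \<epsilon>"
    using assms(1,5) norm2_sq_nonneg unfolding \<sigma>_def h_def by auto
  note bounds = small_parameter_bounds[OF this assms(6)]
  have "(dist01 c)^2 < (1/4)^2"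
    using dist01_const_sq_le[of r n f c h, OF r f] assms(4) bounds(2) unfolding \<sigma>_def
    by (simp add: power2_eq_square)
  then have "dist01 c < 1/4"
    by (rule power2_less_imp_less) simp
  then have "\<sigma> \<le> \<epsilon> + 64 * avg r n (\<lambda>T. (cmod (h T))^4)"
    using norm2_sq_le_dist01_add_pow4[of r n f c h, OF r f] avg_level_eq_1[OF r] assms(4)
    unfolding \<sigma>_def h_def by force
  then have "\<sigma> - 192 * real r * \<sigma>^2 \<le> \<epsilon>"
    using avg_norm_pow4_level_eq_1_le[OF r, of n f] unfolding \<sigma>_def h_def by simp
  then have "\<sigma> < 2 * \<epsilon>"
    by (rule less_double_if_sub_quadratic_le[OF \<open>0 \<le> \<sigma>\<close> bounds(1) _ bounds(3)])
  then show ?thesis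
    unfolding \<sigma>_def h_def .
qed

end
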